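(* Let $\mathrm{Sch}$ be a schema with access methods (possibly result-bounded) and constraints $\Sigma$ consisting of inclusion dependencies, and let $Q$ be a Boolean conjunctive query that is access-determined over $\mathrm{Sch}$. Then $Q$ is access monotonically-determined over $\mathrm{Sch}$.
   Context: An inclusion dependency is a TGD $R(\vec x)\rightarrow\exists\vec y\,S(\vec z)$ with single body and head atoms and no repeated variables. A schema consists of a signature, constraints $\Sigma$, and access methods, each on a relation $R$ with input positions and possibly a result bound $k$. An access $(\mathrm{mt},\mathrm{AccBind})$ on instance $I$ binds the input positions to values of $I$; its matching tuples $M$ are the $R$-tuples agreeing with the binding; a valid output is $J\subseteq M$ with $J=M$ if no bound, and for result bound $k$, $|J|\le k$ and $\forall j\le k$: $|M|\ge j\Rightarrow|J|\ge j$. A valid access selection $\sigma$ maps each access to a valid output. The accessible part $\mathrm{AccPart}(\sigma,I)=\bigcup_i\mathrm{AccPart}_i$, where $\mathrm{AccPart}_0=\mathrm{accessible}_0=\emptyset$, $\mathrm{AccPart}_{i+1}$ is the union of the facts $\sigma(\mathrm{mt},\mathrm{AccBind})$ over all methods and bindings with values in $\mathrm{accessible}_i$, and $\mathrm{accessible}_{i+1}$ is the set of values of $\mathrm{AccPart}_{i+1}$. $Q$ is access monotonically-determined if for all instances $I_1,I_2$ satisfying $\Sigma$ with valid access selections $\sigma_1,\sigma_2$ such that $\mathrm{AccPart}(\sigma_1,I_1)\subseteq\mathrm{AccPart}(\sigma_2,I_2)$, we have $Q(I_1)\subseteq Q(I_2)$. $Q$ is access-determined if for all instances $I_1,I_2$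 satisfying $\Sigma$ with valid access selections $\sigma_1,\sigma_2$ such that $\mathrm{AccPart}(\sigma_1,I_1)=\mathrm{AccPart}(\sigma_2,I_2)$, we have $Q(I_1)=Q(I_2)$. Instances may be finite or infinite. *)

theory Defs
  imports Main
begin

type_synonym ('r,'v) fact = "'r \<times> 'v list"
type_synonym ('r,'v) inst = "('r,'v) fact set"

definition well_formed_inst :: "('r \<Rightarrow> nat) \<Rightarrow> ('r,'v) inst \<Rightarrow> bool" where
  "well_formed_inst ar I \<longleftrightarrow> (\<forall>f \<in> I. length (snd f) = ar (fst f))"

definition values_of :: "('r,'v) inst \<Rightarrow> 'v set" where
  "values_of I = (\<Union>f \<in> I. set (snd f))"

text \<open>An ID  R(xs) --> exists ys. S(zs): body relation, body variables, head relation,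
  head variables; the existential variables ys are the head variables not occurring in xs.\<close>
record ('r,'x) incl_dep =
  id_body_rel :: 'r
  id_body_vars :: "'x list"
  id_head_rel :: 'r
  id_head_vars :: "'x list"

definition well_formed_id :: "('r \<Rightarrow> nat) \<Rightarrow> ('r,'x) incl_dep \<Rightarrow> bool" where
  "well_formed_id ar \<tau> \<longleftrightarrow>
     length (id_body_vars \<tau>) = ar (id_body_rel \<tau>) \<and>
     length (id_head_vars \<tau>) = ar (id_head_rel \<tau>) \<and>
     distinct (id_body_vars \<tau>) \<and> distinct (id_head_vars \<tau>)"

definition satisfies_id :: "('r,'v) inst \<Rightarrow> ('r,'x) incl_dep \<Rightarrow> bool" where
  "satisfies_id I \<tau> \<longleftrightarrow>
     (\<forall>h :: 'x \<Rightarrow> 'v. (id_body_rel \<tau>, map h (id_body_vars \<tau>)) \<in> I \<longrightarrow>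
        (\<exists>h' :: 'x \<Rightarrow> 'v. (\<forall>x \<in> set (id_body_vars \<tau>). h' x = h x) \<and>
                         (id_head_rel \<tau>, map h' (id_head_vars \<tau>)) \<in> I))"

definition satisfies :: "('r,'v) inst \<Rightarrow> ('r,'x) incl_dep set \<Rightarrow> bool" where
  "satisfies I \<Sigma> \<longleftrightarrow> (\<forall>\<tau> \<in> \<Sigma>. satisfies_id I \<tau>)"

text \<open>Access methods are named by elements of type 'm; each has a relation, a set of
  input positions (0-based) and an optional result bound.\<close>
record ('r,'x,'m) schema =
  arity :: "'r \<Rightarrow> nat"
  constraints :: "('r,'x) incl_dep set"
  methods :: "'m set"
  meth_rel :: "'m \<Rightarrow> 'r"
  meth_inputs :: "'m \<Rightarrow> nat set"
  meth_bound :: "'m \<Rightarrow> nat option"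

definition well_formed_schema :: "('r,'x,'m) schema \<Rightarrow> bool" where
  "well_formed_schema Sch \<longleftrightarrow>
     (\<forall>\<tau> \<in> constraints Sch. well_formed_id (arity Sch) \<tau>) \<and>
     (\<forall>mt \<in> methods Sch. meth_inputs Sch mt \<subseteq> {..< arity Sch (meth_rel Sch mt)})"

text \<open>A binding assigns values exactly to the input positions of the method.\<close>
type_synonym 'v binding = "nat \<Rightarrow> 'v option"

definition matching :: "('r,'x,'m) schema \<Rightarrow> ('r,'v) inst \<Rightarrow> 'm \<Rightarrow> 'v binding \<Rightarrow> ('r,'v) inst" where
  "matching Sch I mt b =
     {f \<in> I. fst f = meth_rel Sch mt \<and>
             (\<forall>i \<in> meth_inputs Sch mt. b i = Some (snd f ! i))}"

definition valid_output :: "('r,'x,'m) schema \<Rightarrow> ('r,'v) inst \<Rightarrow> 'm \<Rightarrow> 'v binding \<Rightarrow> ('r,'v) inst \<Rightarrow> bool" where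
  "valid_output Sch I mt b J \<longleftrightarrow>
     (let M = matching Sch I mt b in
       J \<subseteq> M \<and>
       (case meth_bound Sch mt of
          None \<Rightarrow> J = M
        | Some k \<Rightarrow> finite J \<and> card J \<le> k \<and>
                    (\<forall>j \<le> k. (infinite M \<or> j \<le> card M) \<longrightarrow> j \<le> card J)))"

type_synonym ('m,'r,'v) selection = "'m \<Rightarrow> 'v binding \<Rightarrow> ('r,'v) inst"

definition valid_selection :: "('r,'x,'m) schema \<Rightarrow> ('r,'v) inst \<Rightarrow> ('m,'r,'v) selection \<Rightarrow> bool" where
  "valid_selection Sch I \<sigma> \<longleftrightarrow>
     (\<forall>mt \<in> methods Sch. \<forall>b. dom b = meth_inputs Sch mt \<and> ran b \<subseteq> values_of I \<longrightarrow>
        valid_output Sch I mt b (\<sigma> mt b))"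

fun acc_part_step :: "('r,'x,'m) schema \<Rightarrow> ('m,'r,'v) selection \<Rightarrow> nat \<Rightarrow> ('r,'v) inst" where
  "acc_part_step Sch \<sigma> 0 = {}"
| "acc_part_step Sch \<sigma> (Suc i) =
     (\<Union>{\<sigma> mt b | mt b. mt \<in> methods Sch \<and> dom b = meth_inputs Sch mt \<and>
                         ran b \<subseteq> values_of (acc_part_step Sch \<sigma> i)})"

definition acc_part :: "('r,'x,'m) schema \<Rightarrow> ('m,'r,'v) selection \<Rightarrow> ('r,'v) inst" where
  "acc_part Sch \<sigma> = (\<Union>i. acc_part_step Sch \<sigma> i)"

type_synonym ('r,'x) bcq = "('r \<times> 'x list) list"

definition well_formed_bcq :: "('r \<Rightarrow> nat) \<Rightarrow> ('r,'x) bcq \<Rightarrow> bool" where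
  "well_formed_bcq ar Q \<longleftrightarrow> (\<forall>a \<in> set Q. length (snd a) = ar (fst a))"

definition holds_bcq :: "('r,'x) bcq \<Rightarrow> ('r,'v) inst \<Rightarrow> bool" where
  "holds_bcq Q I \<longleftrightarrow> (\<exists>h :: 'x \<Rightarrow> 'v. \<forall>a \<in> set Q. (fst a, map h (snd a)) \<in> I)"

text \<open>For a Boolean query, Q(I1) \<subseteq> Q(I2) means Q(I1) implies Q(I2).\<close>
definition access_mono_determined :: "('r,'x,'m) schema \<Rightarrow> ('r,'x) bcq \<Rightarrow> 'v itself \<Rightarrow> bool" where
  "access_mono_determined Sch Q _ \<longleftrightarrow>
     (\<forall>(I1 :: ('r,'v) inst) I2 \<sigma>1 \<sigma>2.
        well_formed_inst (arity Sch) I1 \<and> well_formed_inst (arity Sch) I2 \<and>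
        satisfies I1 (constraints Sch) \<and> satisfies I2 (constraints Sch) \<and>
        valid_selection Sch I1 \<sigma>1 \<and> valid_selection Sch I2 \<sigma>2 \<and>
        acc_part Sch \<sigma>1 \<subseteq> acc_part Sch \<sigma>2 \<longrightarrow>
        (holds_bcq Q I1 \<longrightarrow> holds_bcq Q I2))"

definition access_determined :: "('r,'x,'m) schema \<Rightarrow> ('r,'x) bcq \<Rightarrow> 'v itself \<Rightarrow> bool" where
  "access_determined Sch Q _ \<longleftrightarrow>
     (\<forall>(I1 :: ('r,'v) inst) I2 \<sigma>1 \<sigma>2.
        well_formed_inst (arity Sch) I1 \<and> well_formed_inst (arity Sch) I2 \<and>
        satisfies I1 (constraints Sch) \<and> satisfies I2 (constraints Sch) \<and>
        valid_selection Sch I1 \<sigma>1 \<and> valid_selection Sch I2 \<sigma>2 \<and>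
        acc_part Sch \<sigma>1 = acc_part Sch \<sigma>2 \<longrightarrow>
        (holds_bcq Q I1 \<longleftrightarrow> holds_bcq Q I2))"

end

theory Submission
  imports Defs
begin

text \<open>Rename the values of \<open>I\<^sub>1\<close> injectively so that its copy \<open>K\<close> shares with the copy \<open>L\<close> of
  \<open>I\<^sub>2\<close> only values accessible in \<open>K\<close>; an infinite value domain leaves room for this. On
  \<open>K \<union> L\<close>, answer every access over values of \<open>L\<close> as in \<open>L\<close>. This is a valid selection: an
  access that also matches tuples of \<open>K\<close> has an accessible binding, so in \<open>K\<close> it already
  returns accessible tuples, which lie in \<open>L\<close>; thus \<open>K\<close> adds matches only when the result
  bound is saturated inside \<open>L\<close>. The accessible part of \<open>K \<union> L\<close> is then that of \<open>L\<close>, and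
  \<open>K \<union> L\<close> satisfies the inclusion dependencies, so access-determinacy transfers
  \<open>Q(K) \<subseteq> Q(K \<union> L)\<close> to \<open>L\<close> and back to \<open>I\<^sub>2\<close>.\<close>

unbundle cardinal_syntax

lemma infinite_UNIV_inj_Plus:
  assumes "infinite (UNIV :: 'v set)"
  obtains p :: "'v + 'v \<Rightarrow> 'v" where "inj p"
proof -
  have "|(UNIV :: 'v set) <+> (UNIV :: 'v set)| =o |(UNIV :: 'v set)|"
    using card_of_Plus_infinite1[OF assms ordIso_imp_ordLeq[OF card_of_refl]] by simp
  then obtain p where "bij_betw p ((UNIV :: 'v set) <+> (UNIV :: 'v set)) (UNIV :: 'v set)"
    using card_of_ordIso by blast
  then show thesis
    using that by (auto simp: bij_betw_def)
qed

lemma infinite_UNIV_renaming_apart: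
  assumes "infinite (UNIV :: 'v set)"
  obtains \<rho> e :: "'v \<Rightarrow> 'v"
  where "inj \<rho>" "inj e" "\<forall>x\<in>V. \<rho> x = e x" "range \<rho> \<inter> range e \<subseteq> e ` V"
proof -
  obtain p :: "'v + 'v \<Rightarrow> 'v" where p: "inj p"
    using infinite_UNIV_inj_Plus[OF assms] .
  define \<rho> where "\<rho> x = (if x \<in> V then p (Inl x) else p (Inr x))" for x
  show thesis
  proof (rule that[of \<rho> "p \<circ> Inl"])
    show "inj \<rho>"
      using p by (auto simp: inj_def \<rho>_def split: if_splits)
    show "inj (p \<circ> Inl)"
      using p by (simp add: inj_compose)
    show "\<forall>x\<in>V. \<rho> x = (p \<circ> Inl) x"
      by (simp add: \<rho>_def)
    show "range \<rho> \<inter> range (p \<circ> Inl) \<subseteq> (p \<circ> Inl) ` V"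
      using p by (auto simp: \<rho>_def inj_eq)
  qed
qed

lemma values_of_mono: "I \<subseteq> J \<Longrightarrow> values_of I \<subseteq> values_of J"
  unfolding values_of_def by blast

definition rename :: "('v \<Rightarrow> 'w) \<Rightarrow> ('r,'v) inst \<Rightarrow> ('r,'w) inst" where
  "rename e I = apsnd (map e) ` I"

lemma mem_rename_iff: "(r, zs) \<in> rename e I \<longleftrightarrow> (\<exists>ys. (r, ys) \<in> I \<and> zs = map e ys)"
  unfolding rename_def by force

lemma values_of_rename: "values_of (rename e I) = e ` values_of I"
  unfolding values_of_def rename_def by auto

lemma rename_mono: "I \<subseteq> J \<Longrightarrow> rename e I \<subseteq> rename e J"
  unfolding rename_def by (rule image_mono)

lemma rename_cong: "\<forall>x\<in>values_of I. \<rho> x = e x \<Longrightarrow> rename \<rho> I = rename e I"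
  unfolding rename_def values_of_def by (force intro!: image_cong)

lemma inj_on_apsnd_map: "inj e \<Longrightarrow> inj_on (apsnd (map e)) I"
  by (metis inj_apsnd inj_mapI inj_on_subset subset_UNIV)

lemma well_formed_inst_rename:
  "well_formed_inst ar I \<Longrightarrow> well_formed_inst ar (rename e I)"
  unfolding well_formed_inst_def rename_def by auto

lemma map_inv_comp_eq:
  assumes "inj e" "map h xs = map e ys"
  shows "map (inv e \<circ> h) xs = ys"
proof -
  have "map (inv e) (map h xs) = map (inv e) (map e ys)"
    using assms(2) by simp
  then show ?thesis
    using assms(1) by simp
qed

lemma holds_bcq_rename_iff:
  assumes "inj e"
  shows "holds_bcq Q (rename e I) \<longleftrightarrow> holds_bcq Q I"
proof
  assume "holds_bcq Q (rename e I)"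
  then obtain h where "\<forall>a\<in>set Q. (fst a, map h (snd a)) \<in> rename e I"
    unfolding holds_bcq_def by blast
  then have "\<forall>a\<in>set Q. (fst a, map (inv e \<circ> h) (snd a)) \<in> I"
    using map_inv_comp_eq[OF assms] by (fastforce simp: mem_rename_iff)
  then show "holds_bcq Q I"
    unfolding holds_bcq_def by blast
next
  assume "holds_bcq Q I"
  then obtain h where "\<forall>a\<in>set Q. (fst a, map h (snd a)) \<in> I"
    unfolding holds_bcq_def by blast
  then have "\<forall>a\<in>set Q. (fst a, map (e \<circ> h) (snd a)) \<in> rename e I"
    by (auto simp: mem_rename_iff)
  then show "holds_bcq Q (rename e I)"
    unfolding holds_bcq_def by blast
qed

lemma holds_bcq_mono: "holds_bcq Q I \<Longrightarrow> I \<subseteq> J \<Longrightarrow> holds_bcq Q J"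
  unfolding holds_bcq_def by blast

lemma satisfies_rename:
  fixes e :: "'v \<Rightarrow> 'w" and \<Sigma> :: "('r,'x) incl_dep set"
  assumes "inj e" "satisfies I \<Sigma>"
  shows "satisfies (rename e I) \<Sigma>"
  unfolding satisfies_def satisfies_id_def
proof (intro ballI allI impI)
  fix \<tau> and h :: "'x \<Rightarrow> 'w"
  assume "\<tau> \<in> \<Sigma>" and "(id_body_rel \<tau>, map h (id_body_vars \<tau>)) \<in> rename e I"
  then obtain ys where ys: "(id_body_rel \<tau>, ys) \<in> I" "map h (id_body_vars \<tau>) = map e ys"
    by (auto simp: mem_rename_iff)
  then have "(id_body_rel \<tau>, map (inv e \<circ> h) (id_body_vars \<tau>)) \<in> I"
    using map_inv_comp_eq[OF assms(1) ys(2)] ys(1) by simp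
  with \<open>\<tau> \<in> \<Sigma>\<close> obtain h' where
    agree: "\<forall>x\<in>set (id_body_vars \<tau>). h' x = (inv e \<circ> h) x" and
    head: "(id_head_rel \<tau>, map h' (id_head_vars \<tau>)) \<in> I"
    using assms(2) unfolding satisfies_def satisfies_id_def by blast
  have "h x \<in> range e" if "x \<in> set (id_body_vars \<tau>)" for x
    using that arg_cong[OF ys(2), of set] by auto
  with agree have "\<forall>x\<in>set (id_body_vars \<tau>). (e \<circ> h') x = h x"
    by (simp add: f_inv_into_f)
  moreover have "(id_head_rel \<tau>, map (e \<circ> h') (id_head_vars \<tau>)) \<in> rename e I"
    using head by (auto simp: mem_rename_iff)
  ultimately show "\<exists>h'. (\<forall>x\<in>set (id_body_vars \<tau>). h' x = h x) \<and>
      (id_head_rel \<tau>, map h' (id_head_vars \<tau>)) \<in> rename e I"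
    by blast
qed

text \<open>This is where the single body atom of an inclusion dependency matters.\<close>
lemma satisfies_Un: "satisfies I \<Sigma> \<Longrightarrow> satisfies J \<Sigma> \<Longrightarrow> satisfies (I \<union> J) \<Sigma>"
  unfolding satisfies_def satisfies_id_def by blast

lemma well_formed_inst_Un:
  "well_formed_inst ar I \<Longrightarrow> well_formed_inst ar J \<Longrightarrow> well_formed_inst ar (I \<union> J)"
  unfolding well_formed_inst_def by blast

definition bindings :: "('r,'x,'m) schema \<Rightarrow> 'm \<Rightarrow> 'v set \<Rightarrow> 'v binding set" where
  "bindings Sch mt V = {b. dom b = meth_inputs Sch mt \<and> ran b \<subseteq> V}"

lemma bindings_image:
  assumes "inj e"
  shows "bindings Sch mt (e ` V) = (\<lambda>c. map_option e \<circ> c) ` bindings Sch mt V"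
proof
  show "bindings Sch mt (e ` V) \<subseteq> (\<lambda>c. map_option e \<circ> c) ` bindings Sch mt V"
  proof
    fix b assume b: "b \<in> bindings Sch mt (e ` V)"
    have "b = map_option e \<circ> (map_option (inv e) \<circ> b)"
    proof
      fix i show "b i = (map_option e \<circ> (map_option (inv e) \<circ> b)) i"
        using b by (cases "b i") (auto simp: bindings_def ran_def f_inv_into_f)
    qed
    moreover have "map_option (inv e) \<circ> b \<in> bindings Sch mt V"
      using b assms by (auto simp: bindings_def ran_def)
    ultimately show "b \<in> (\<lambda>c. map_option e \<circ> c) ` bindings Sch mt V"
      by blast
  qed
next
  show "(\<lambda>c. map_option e \<circ> c) ` bindings Sch mt V \<subseteq> bindings Sch mt (e ` V)"
  proof
    fix b assume "b \<in> (\<lambda>c. map_option e \<circ> c) ` bindings Sch mt V"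
    then obtain c where "c \<in> bindings Sch mt V" "b = map_option e \<circ> c"
      by blast
    moreover have "ran (map_option e \<circ> c) = e ` ran c"
      using ran_map_option[of e c] by (simp add: comp_def)
    ultimately show "b \<in> bindings Sch mt (e ` V)"
      unfolding bindings_def by auto
  qed
qed

lemma valid_selection_iff:
  "valid_selection Sch I \<sigma> \<longleftrightarrow>
     (\<forall>mt\<in>methods Sch. \<forall>b\<in>bindings Sch mt (values_of I). valid_output Sch I mt b (\<sigma> mt b))"
  unfolding valid_selection_def bindings_def by blast

lemma acc_part_step_Suc_eq:
  "acc_part_step Sch \<sigma> (Suc i) =
     (\<Union>mt\<in>methods Sch. \<Union>b\<in>bindings Sch mt (values_of (acc_part_step Sch \<sigma> i)). \<sigma> mt b)"
  unfolding bindings_def by auto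

lemma acc_part_step_mono:
  assumes "i \<le> j"
  shows "acc_part_step Sch \<sigma> i \<subseteq> acc_part_step Sch \<sigma> j"
proof -
  have "acc_part_step Sch \<sigma> i \<subseteq> acc_part_step Sch \<sigma> (Suc i)" for i
  proof (induction i)
    case (Suc i)
    then have "bindings Sch mt (values_of (acc_part_step Sch \<sigma> i))
        \<subseteq> bindings Sch mt (values_of (acc_part_step Sch \<sigma> (Suc i)))" for mt
      unfolding values_of_def bindings_def by blast
    then show ?case
      unfolding acc_part_step_Suc_eq[of _ _ "Suc i"] acc_part_step_Suc_eq[of _ _ i] by blast
  qed simp
  then show ?thesis
    using lift_Suc_mono_le[of "acc_part_step Sch \<sigma>"] assms by blast
qed

lemma acc_part_subset:
  assumes "valid_selection Sch I \<sigma>"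
  shows "acc_part Sch \<sigma> \<subseteq> I"
proof -
  have "acc_part_step Sch \<sigma> i \<subseteq> I" for i
  proof (induction i)
    case (Suc i)
    then have "bindings Sch mt (values_of (acc_part_step Sch \<sigma> i)) \<subseteq> bindings Sch mt (values_of I)"
      for mt
      unfolding values_of_def bindings_def by blast
    with assms have "\<sigma> mt b \<subseteq> I"
      if "mt \<in> methods Sch" "b \<in> bindings Sch mt (values_of (acc_part_step Sch \<sigma> i))" for mt b
      using that unfolding valid_selection_iff valid_output_def Let_def matching_def by blast
    then show ?case
      unfolding acc_part_step_Suc_eq by blast
  qed simp
  then show ?thesis
    unfolding acc_part_def by blast
qed

lemma values_of_acc_part: "values_of (acc_part Sch \<sigma>) = (\<Union>i. values_of (acc_part_step Sch \<sigma> i))"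
  unfolding acc_part_def values_of_def by blast

lemma selection_subset_acc_part:
  assumes "well_formed_schema Sch" "mt \<in> methods Sch"
    and b: "b \<in> bindings Sch mt (values_of (acc_part Sch \<sigma>))"
  shows "\<sigma> mt b \<subseteq> acc_part Sch \<sigma>"
proof -
  let ?V = "\<lambda>i. values_of (acc_part_step Sch \<sigma> i)"
  have "dom b \<subseteq> {..< arity Sch (meth_rel Sch mt)}"
    using assms unfolding well_formed_schema_def bindings_def by simp
  then have fin: "finite (ran b)"
    using finite_subset finite_ran by blast
  have cover: "ran b \<subseteq> \<Union>(range ?V)"
    using b unfolding bindings_def values_of_acc_part by simp
  have chain: "subset.chain UNIV (range ?V)"
    unfolding subset_chain_def
  proof (intro conjI ballI)
    fix A B assume "A \<in> range ?V" "B \<in> range ?V"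
    then obtain i j where "A = ?V i" "B = ?V j"
      by blast
    then show "A \<subseteq> B \<or> B \<subseteq> A"
      using nat_le_linear[of i j] by (metis acc_part_step_mono values_of_mono)
  qed simp
  obtain B where "B \<in> range ?V" "ran b \<subseteq> B"
    using finite_subset_Union_chain[OF fin cover _ chain] by blast
  then obtain i where "b \<in> bindings Sch mt (?V i)"
    using b unfolding bindings_def by blast
  with assms(2) have "\<sigma> mt b \<subseteq> acc_part_step Sch \<sigma> (Suc i)"
    unfolding acc_part_step_Suc_eq by blast
  then show ?thesis
    unfolding acc_part_def by blast
qed

definition rename_selection :: "('v \<Rightarrow> 'w) \<Rightarrow> ('m,'r,'v) selection \<Rightarrow> ('m,'r,'w) selection" where
  "rename_selection e \<sigma> mt b = rename e (\<sigma> mt (map_option (inv e) \<circ> b))"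

lemma rename_selection_rename_binding:
  "inj e \<Longrightarrow> rename_selection e \<sigma> mt (map_option e \<circ> c) = rename e (\<sigma> mt c)"
proof -
  assume "inj e"
  then have "map_option (inv e) \<circ> (map_option e \<circ> c) = c"
    by (simp add: fun_eq_iff option.map_comp option.map_id)
  then show ?thesis
    unfolding rename_selection_def by simp
qed

lemma acc_part_rename:
  assumes "inj e"
  shows "acc_part Sch (rename_selection e \<sigma>) = rename e (acc_part Sch \<sigma>)"
proof -
  have "acc_part_step Sch (rename_selection e \<sigma>) i = rename e (acc_part_step Sch \<sigma> i)" for i
  proof (induction i)
    case 0
    then show ?case
      by (simp add: rename_def)
  next
    case (Suc i)
    then show ?case
      unfolding acc_part_step_Suc_eq Suc values_of_rename bindings_image[OF assms]
      by (simp add: rename_selection_rename_binding[OF assms] rename_def image_UN)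
  qed
  then show ?thesis
    unfolding acc_part_def by (simp add: rename_def image_UN)
qed

lemma matching_rename:
  assumes "inj e" "well_formed_schema Sch" "mt \<in> methods Sch" "well_formed_inst (arity Sch) I"
  shows "matching Sch (rename e I) mt (map_option e \<circ> c) = rename e (matching Sch I mt c)"
proof -
  have "i < length (snd f)"
    if "f \<in> I" "fst f = meth_rel Sch mt" "i \<in> meth_inputs Sch mt" for f i
    using assms(2-4) that unfolding well_formed_schema_def well_formed_inst_def by fastforce
  moreover have "map_option e x = Some (e y) \<longleftrightarrow> x = Some y" for x y
    using assms(1) by (cases x) (auto simp: inj_eq)
  ultimately show ?thesis
    unfolding matching_def rename_def by (auto simp: image_iff)
qed

lemma valid_output_rename:
  fixes e :: "'v \<Rightarrow> 'w" and I :: "('r,'v) inst"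
  assumes "inj e" "well_formed_schema Sch" "mt \<in> methods Sch" "well_formed_inst (arity Sch) I"
    and "valid_output Sch I mt c J"
  shows "valid_output Sch (rename e I) mt (map_option e \<circ> c) (rename e J)"
proof -
  have inj: "inj_on (apsnd (map e)) A" for A
    using inj_on_apsnd_map[OF assms(1)] .
  have [simp]: "card (rename e A) = card A" "finite (rename e A) \<longleftrightarrow> finite A" for A
    unfolding rename_def using card_image[OF inj] finite_image_iff[OF inj] by blast+
  have [simp]: "rename e A \<subseteq> rename e B \<longleftrightarrow> A \<subseteq> B" "rename e A = rename e B \<longleftrightarrow> A = B" for A B
    using inj[of UNIV] unfolding rename_def by (simp_all add: inj_image_subset_iff inj_image_eq_iff)
  show ?thesis
    using assms(5) unfolding valid_output_def Let_def matching_rename[OF assms(1-4)]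
    by (cases "meth_bound Sch mt") simp_all
qed

lemma valid_selection_rename:
  assumes "inj e" "well_formed_schema Sch" "well_formed_inst (arity Sch) I"
    and "valid_selection Sch I \<sigma>"
  shows "valid_selection Sch (rename e I) (rename_selection e \<sigma>)"
  unfolding valid_selection_iff values_of_rename bindings_image[OF assms(1)]
proof (intro ballI, elim imageE)
  fix mt b c
  assume "mt \<in> methods Sch" "c \<in> bindings Sch mt (values_of I)" "b = map_option e \<circ> c"
  with assms show "valid_output Sch (rename e I) mt b (rename_selection e \<sigma> mt b)"
    by (simp add: valid_selection_iff valid_output_rename rename_selection_rename_binding)
qed

lemma matching_Un: "matching Sch (K \<union> L) mt b = matching Sch K mt b \<union> matching Sch L mt b"
  unfolding matching_def by auto

lemma valid_output_exists: "\<exists>J. valid_output Sch I mt b J"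
proof (cases "meth_bound Sch mt")
  case None
  then show ?thesis
    unfolding valid_output_def Let_def by auto
next
  case (Some k)
  define M where "M = matching Sch I mt b"
  obtain J where "J \<subseteq> M" "finite J" "card J = (if finite M then min k (card M) else k)"
  proof (cases "finite M")
    case True
    then show thesis
      using obtain_subset_with_card_n[of "min k (card M)" M] that by auto
  next
    case False
    then show thesis
      using infinite_arbitrarily_large[of M k] that by auto
  qed
  with Some show ?thesis
    unfolding valid_output_def Let_def M_def[symmetric] by (auto split: if_splits)
qed

lemma valid_output_proper_subset_card:
  assumes "valid_output Sch I mt b J" "J \<noteq> matching Sch I mt b"
  obtains k where "meth_bound Sch mt = Some k" "finite J" "card J = k"
proof (cases "meth_bound Sch mt")
  case None
  then show thesis
    using assms unfolding valid_output_def Let_def by simp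
next
  case (Some k)
  define M where "M = matching Sch I mt b"
  have J: "J \<subseteq> M" "finite J" "card J \<le> k" "\<forall>j\<le>k. (infinite M \<or> j \<le> card M) \<longrightarrow> j \<le> card J"
    using assms(1) Some unfolding valid_output_def Let_def M_def by auto
  have "infinite M \<or> k \<le> card M"
  proof (rule ccontr)
    assume "\<not> (infinite M \<or> k \<le> card M)"
    then have "finite M" "card M \<le> card J"
      using J(4) by auto
    then have "J = M"
      using J(1) card_subset_eq card_mono by (metis le_antisym)
    with assms(2) show False
      unfolding M_def by simp
  qed
  with J have "card J = k"
    by auto
  with Some J(2) show thesis
    using that by blast
qed

text \<open>If \<open>K\<close> adds matches, the output over \<open>K\<close> is a proper subset of its matches, hence has
  \<open>k\<close> tuples, all in \<open>L\<close>; so \<open>L\<close> has \<open>k\<close> matches and the output over \<open>L\<close> saturates the bound.\<close>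
lemma valid_output_Un:
  assumes K: "valid_output Sch K mt b JK" and "JK \<subseteq> L"
    and L: "valid_output Sch L mt b JL"
  shows "valid_output Sch (K \<union> L) mt b JL"
proof (cases "matching Sch K mt b \<subseteq> matching Sch L mt b")
  case True
  then have "matching Sch (K \<union> L) mt b = matching Sch L mt b"
    unfolding matching_Un by blast
  with L show ?thesis
    unfolding valid_output_def by simp
next
  case False
  have "JK \<subseteq> matching Sch K mt b"
    using K unfolding valid_output_def Let_def by simp
  with \<open>JK \<subseteq> L\<close> have JK_L: "JK \<subseteq> matching Sch L mt b"
    unfolding matching_def by blast
  with False obtain k where k: "meth_bound Sch mt = Some k" "finite JK" "card JK = k"
    using valid_output_proper_subset_card[OF K] by blast
  with JK_L have "infinite (matching Sch L mt b) \<or> k \<le> card (matching Sch L mt b)"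
    using card_mono by blast
  with L k(1) show ?thesis
    unfolding valid_output_def Let_def matching_Un by auto
qed

lemma ran_subset_values_of_matching:
  assumes "well_formed_schema Sch" "mt \<in> methods Sch" "well_formed_inst (arity Sch) I"
    and "dom b = meth_inputs Sch mt" "matching Sch I mt b \<noteq> {}"
  shows "ran b \<subseteq> values_of I"
proof
  fix v assume "v \<in> ran b"
  then obtain i where i: "b i = Some v" "i \<in> meth_inputs Sch mt"
    using assms(4) by (auto simp: ran_def)
  obtain f where f: "f \<in> I" "fst f = meth_rel Sch mt" "\<forall>i\<in>meth_inputs Sch mt. b i = Some (snd f ! i)"
    using assms(5) unfolding matching_def by blast
  have "i < length (snd f)"
    using assms(1-3) f i(2) unfolding well_formed_schema_def well_formed_inst_def by fastforce
  with f i show "v \<in> values_of I"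
    unfolding values_of_def by force
qed

lemma valid_output_Un_selection:
  assumes wf: "well_formed_schema Sch" and wfK: "well_formed_inst (arity Sch) K"
    and K: "valid_selection Sch K \<sigma>K" and L: "valid_selection Sch L \<sigma>L"
    and acc_sub: "acc_part Sch \<sigma>K \<subseteq> acc_part Sch \<sigma>L"
    and overlap: "values_of K \<inter> values_of L \<subseteq> values_of (acc_part Sch \<sigma>K)"
    and mt: "mt \<in> methods Sch" and b: "b \<in> bindings Sch mt (values_of L)"
  shows "valid_output Sch (K \<union> L) mt b (\<sigma>L mt b)"
proof -
  have L_output: "valid_output Sch L mt b (\<sigma>L mt b)"
    using L mt b unfolding valid_selection_iff by blast
  show ?thesis
  proof (cases "matching Sch K mt b = {}")
    case True
    then have "matching Sch (K \<union> L) mt b = matching Sch L mt b"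
      by (simp add: matching_Un)
    with L_output show ?thesis
      unfolding valid_output_def by simp
  next
    case False
    then have "ran b \<subseteq> values_of K"
      using b ran_subset_values_of_matching[OF wf mt wfK] by (simp add: bindings_def)
    with b overlap have bK: "b \<in> bindings Sch mt (values_of K)"
      and b_acc: "b \<in> bindings Sch mt (values_of (acc_part Sch \<sigma>K))"
      unfolding bindings_def by auto
    have "valid_output Sch K mt b (\<sigma>K mt b)"
      using K mt bK unfolding valid_selection_iff by blast
    moreover have "\<sigma>K mt b \<subseteq> L"
      using selection_subset_acc_part[OF wf mt b_acc] acc_sub acc_part_subset[OF L] by blast
    ultimately show ?thesis
      using L_output by (rule valid_output_Un)
  qed
qed

lemma valid_selection_Un:
  assumes wf: "well_formed_schema Sch" and wfK: "well_formed_inst (arity Sch) K"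
    and K: "valid_selection Sch K \<sigma>K" and L: "valid_selection Sch L \<sigma>L"
    and acc_sub: "acc_part Sch \<sigma>K \<subseteq> acc_part Sch \<sigma>L"
    and overlap: "values_of K \<inter> values_of L \<subseteq> values_of (acc_part Sch \<sigma>K)"
  obtains \<sigma> where "valid_selection Sch (K \<union> L) \<sigma>" "acc_part Sch \<sigma> = acc_part Sch \<sigma>L"
proof -
  define \<sigma> where "\<sigma> mt b =
    (if ran b \<subseteq> values_of L then \<sigma>L mt b else SOME J. valid_output Sch (K \<union> L) mt b J)" for mt b
  have "valid_selection Sch (K \<union> L) \<sigma>"
    unfolding valid_selection_iff
  proof (intro ballI)
    fix mt b assume mt: "mt \<in> methods Sch" and b: "b \<in> bindings Sch mt (values_of (K \<union> L))"
    show "valid_output Sch (K \<union> L) mt b (\<sigma> mt b)"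
    proof (cases "ran b \<subseteq> values_of L")
      case True
      with b have "b \<in> bindings Sch mt (values_of L)"
        unfolding bindings_def by blast
      with True show ?thesis
        using valid_output_Un_selection[OF assms mt] by (simp add: \<sigma>_def)
    next
      case False
      then show ?thesis
        using someI_ex[OF valid_output_exists] by (simp add: \<sigma>_def)
    qed
  qed
  moreover have "acc_part_step Sch \<sigma> i = acc_part_step Sch \<sigma>L i" for i
  proof (induction i)
    case (Suc i)
    have "acc_part_step Sch \<sigma>L i \<subseteq> L"
      using acc_part_subset[OF L] unfolding acc_part_def by blast
    then have "values_of (acc_part_step Sch \<sigma>L i) \<subseteq> values_of L"
      by (rule values_of_mono)
    then have "\<sigma> mt b = \<sigma>L mt b" if "b \<in> bindings Sch mt (values_of (acc_part_step Sch \<sigma>L i))" for mt b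
      using that unfolding \<sigma>_def bindings_def by auto
    then show ?case
      unfolding acc_part_step_Suc_eq Suc by (intro SUP_cong refl) simp
  qed simp
  then have "acc_part Sch \<sigma> = acc_part Sch \<sigma>L"
    unfolding acc_part_def by simp
  ultimately show thesis
    by (rule that)
qed

lemma access_determined_transfer:
  assumes det: "access_determined Sch Q TYPE('v)" and wf: "well_formed_schema Sch"
    and wfK: "well_formed_inst (arity Sch) K" and wfL: "well_formed_inst (arity Sch) L"
    and satK: "satisfies K (constraints Sch)" and satL: "satisfies L (constraints Sch)"
    and K: "valid_selection Sch K \<sigma>K" and L: "valid_selection Sch L \<sigma>L"
    and acc_sub: "acc_part Sch \<sigma>K \<subseteq> acc_part Sch \<sigma>L"
    and overlap: "values_of K \<inter> values_of L \<subseteq> values_of (acc_part Sch \<sigma>K)"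
    and "holds_bcq Q K"
  shows "holds_bcq Q (L :: ('r,'v) inst)"
proof -
  obtain \<sigma> where "valid_selection Sch (K \<union> L) \<sigma>" "acc_part Sch \<sigma> = acc_part Sch \<sigma>L"
    using valid_selection_Un[OF wf wfK K L acc_sub overlap] .
  with det have "holds_bcq Q (K \<union> L) \<longleftrightarrow> holds_bcq Q L"
    using well_formed_inst_Un[OF wfK wfL] wfL satisfies_Un[OF satK satL] satL L
    unfolding access_determined_def by blast
  moreover have "holds_bcq Q (K \<union> L)"
    using holds_bcq_mono[OF \<open>holds_bcq Q K\<close>] by blast
  ultimately show ?thesis
    by blast
qed

theorem mainTheorem14:
  fixes Sch :: "('r,'x,'m) schema" and Q :: "('r,'x) bcq"
  assumes "infinite (UNIV :: 'v set)"
    and "well_formed_schema Sch"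
    and "well_formed_bcq (arity Sch) Q"
    and "access_determined Sch Q TYPE('v)"
  shows "access_mono_determined Sch Q TYPE('v)"
  unfolding access_mono_determined_def
proof (intro allI impI, elim conjE)
  fix I1 I2 :: "('r,'v) inst" and \<sigma>1 \<sigma>2
  assume wf: "well_formed_inst (arity Sch) I1" "well_formed_inst (arity Sch) I2"
    and sat: "satisfies I1 (constraints Sch)" "satisfies I2 (constraints Sch)"
    and valid: "valid_selection Sch I1 \<sigma>1" "valid_selection Sch I2 \<sigma>2"
    and acc_sub: "acc_part Sch \<sigma>1 \<subseteq> acc_part Sch \<sigma>2" and "holds_bcq Q I1"
  obtain \<rho> e :: "'v \<Rightarrow> 'v" where \<rho>: "inj \<rho>" and e: "inj e"
    and agree: "\<forall>x\<in>values_of (acc_part Sch \<sigma>1). \<rho> x = e x"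
    and apart: "range \<rho> \<inter> range e \<subseteq> e ` values_of (acc_part Sch \<sigma>1)"
    using infinite_UNIV_renaming_apart[OF assms(1)] by blast
  have acc: "acc_part Sch (rename_selection \<rho> \<sigma>1) = rename e (acc_part Sch \<sigma>1)"
    unfolding acc_part_rename[OF \<rho>] by (rule rename_cong[OF agree])
  have "holds_bcq Q (rename e I2)"
  proof (rule access_determined_transfer[OF assms(4,2)])
    show "acc_part Sch (rename_selection \<rho> \<sigma>1) \<subseteq> acc_part Sch (rename_selection e \<sigma>2)"
      unfolding acc acc_part_rename[OF e] by (rule rename_mono[OF acc_sub])
    show "values_of (rename \<rho> I1) \<inter> values_of (rename e I2)
        \<subseteq> values_of (acc_part Sch (rename_selection \<rho> \<sigma>1))"
      using apart unfolding acc values_of_rename by blast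
  qed (use assms(2) \<rho> e wf sat valid \<open>holds_bcq Q I1\<close> in
      \<open>simp_all add: well_formed_inst_rename satisfies_rename valid_selection_rename holds_bcq_rename_iff\<close>)
  then show "holds_bcq Q I2"
    using holds_bcq_rename_iff[OF e] by blast
qed

end
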